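(* Let $(\sigma_i)_{i\in\mathbb{N}}$ be i.i.d. copies of $\sigma_0$, where $L(u):=1/\mathbf{P}(\sigma_0>u)$ is slowly varying. For $x>0$ let $i_x:=\min\{i:\sigma_i>x\}$ and $i_x^-:=\mathrm{argmax}\{\sigma_i:i<i_x\}$. Then, as $x\to\infty$, each of the four families \[ \frac{i_x}{L(x)},\qquad \frac{L(\sigma_{i_x})}{L(x)}-1,\qquad \frac{L(\sigma_{i_x^-})}{L(x)},\qquad 1-\frac{L(\sigma_{i_x^-})}{L(x)} \] is bounded above and bounded below in probability.
   Context: $\sigma_0$ is a strictly positive random variable under $\mathbf{P}$ and $L(u):=1/\mathbf{P}(\sigma_0>u)$ satisfies $\lim_{u\to\infty}L(uv)/L(u)=1$ for all $v>0$. A family $(Y_x)$ of non-negative random variables is bounded above in probability if $(Y_x)$ is tight (for large $x$), and bounded below in probability if $(1/Y_x)$ is tight. *)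

theory Defs
  imports "HOL-Probability.Probability"
begin

definition tailL :: "'a measure \<Rightarrow> ('a \<Rightarrow> real) \<Rightarrow> real \<Rightarrow> real" where
  "tailL M X u = 1 / measure M {\<omega> \<in> space M. u < X \<omega>}"

definition slowly_varying :: "(real \<Rightarrow> real) \<Rightarrow> bool" where
  "slowly_varying L \<longleftrightarrow> (\<forall>v>0. ((\<lambda>u. L (u * v) / L u) \<longlongrightarrow> 1) at_top)"

definition first_exceed :: "(nat \<Rightarrow> 'a \<Rightarrow> real) \<Rightarrow> real \<Rightarrow> 'a \<Rightarrow> nat" where
  "first_exceed \<sigma> x \<omega> = (LEAST i. x < \<sigma> i \<omega>)"

definition prev_argmax :: "(nat \<Rightarrow> 'a \<Rightarrow> real) \<Rightarrow> real \<Rightarrow> 'a \<Rightarrow> nat" where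
  "prev_argmax \<sigma> x \<omega> = (ARG_MAX (\<lambda>i. \<sigma> i \<omega>) i. i < first_exceed \<sigma> x \<omega>)"

definition bdd_above_in_prob :: "'a measure \<Rightarrow> (real \<Rightarrow> 'a \<Rightarrow> real) \<Rightarrow> bool" where
  "bdd_above_in_prob M Y \<longleftrightarrow>
     (\<forall>\<epsilon>>0. \<exists>K. \<forall>\<^sub>F x in at_top. measure M {\<omega> \<in> space M. K < Y x \<omega>} < \<epsilon>)"

text \<open>Family (Y_x) bounded below in probability: (1/Y_x) tight for large x, where
  1/Y > K (K > 0) means Y < 1/K (with 1/0 = infinity).\<close>
definition bdd_below_in_prob :: "'a measure \<Rightarrow> (real \<Rightarrow> 'a \<Rightarrow> real) \<Rightarrow> bool" where
  "bdd_below_in_prob M Y \<longleftrightarrow>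
     (\<forall>\<epsilon>>0. \<exists>\<delta>>0. \<forall>\<^sub>F x in at_top. measure M {\<omega> \<in> space M. Y x \<omega> < \<delta>} < \<epsilon>)"

end

theory Submission
  imports Defs
begin

text \<open>Write p(x) = P(sigma_0 > x) = 1/L(x). The index i_x is geometric with parameter
  p(x), and the relevant events about sigma_(i_x) and about the maximum before i_x have the form
  "the sequence enters B before leaving A", whose probability is at most
  P(sigma_0 \<in> B) / (1 - P(sigma_0 \<in> A)) by a geometric series. This controls the
  ratios p(x)/p(sigma) through the level sets {t. p t < c} and {t. c < p t}. Since the law of
  sigma_0 may have atoms, these sets need not be half-lines of tail mass exactly c; slow
  variation of L, which makes p(t/2) and p(2t) comparable to p(t), shows that they are
  half-lines up to a factor 1 + \<eta> in the tail mass.\<close>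

lemma slowly_varying_inverse_pos:
  fixes p :: "real \<Rightarrow> real"
  assumes antimono: "\<And>s t. s \<le> t \<Longrightarrow> p t \<le> p s" and nonneg: "\<And>u. 0 \<le> p u"
    and sv: "slowly_varying (\<lambda>u. 1 / p u)"
  shows "0 < p u"
proof (rule ccontr)
  assume "\<not> 0 < p u"
  then have zero: "p w = 0" if "u \<le> w" for w
    using antimono[OF that] nonneg[of u] nonneg[of w] by linarith
  have "\<forall>\<^sub>F w in at_top. (1 / p (w * 2)) / (1 / p w) = 0"
    using eventually_ge_at_top[of u] by eventually_elim (simp add: zero)
  moreover have "((\<lambda>w. (1 / p (w * 2)) / (1 / p w)) \<longlongrightarrow> 1) at_top"
    using sv unfolding slowly_varying_def by simp
  ultimately have "((\<lambda>w::real. 0::real) \<longlongrightarrow> 1) at_top"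
    by (rule Lim_transform_eventually[rotated])
  then show False by (simp add: tendsto_const_iff)
qed

lemma relative_gap_less:
  fixes a b d :: real
  assumes "0 < a" "0 < d" "a < (1 + d)\<^sup>2 * b"
  shows "(a - b) / a < 2 * d"
proof -
  have "a * (1 - 2 * d) * (1 + d)\<^sup>2 \<le> a"
    using assms by (simp add: algebra_simps power2_eq_square)
  also have "a < b * (1 + d)\<^sup>2"
    using assms(3) by (simp add: mult.commute)
  finally have "a * (1 - 2 * d) < b"
    using assms(2) by (simp add: mult_less_cancel_right)
  then show ?thesis
    using assms(1) by (simp add: field_simps)
qed

locale slowly_varying_tail =
  fixes p :: "real \<Rightarrow> real"
  assumes antimono: "\<And>s t. s \<le> t \<Longrightarrow> p t \<le> p s"
    and pos: "\<And>u. 0 < p u"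
    and tendsto_zero: "(p \<longlongrightarrow> 0) at_top"
    and sv: "slowly_varying (\<lambda>u. 1 / p u)"
begin

lemma eventually_half_less:
  assumes "0 < \<eta>" shows "\<forall>\<^sub>F u in at_top. p (u / 2) < (1 + \<eta>) * p u"
proof -
  have "((\<lambda>u. (1 / p (u * (1/2))) / (1 / p u)) \<longlongrightarrow> 1) at_top"
    using sv[unfolded slowly_varying_def, rule_format, of "1/2"] by simp
  then have "((\<lambda>u. p u / p (u / 2)) \<longlongrightarrow> 1) at_top"
    by simp
  then have "\<forall>\<^sub>F u in at_top. 1 / (1 + \<eta>) < p u / p (u / 2)"
    using assms by (intro order_tendstoD(1)) auto
  then show ?thesis
    by eventually_elim (use assms pos in \<open>simp add: field_simps\<close>)
qed

lemma eventually_less_double: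
  assumes "0 < \<eta>" shows "\<forall>\<^sub>F u in at_top. p u < (1 + \<eta>) * p (2 * u)"
proof -
  have "((\<lambda>u. (1 / p (u * 2)) / (1 / p u)) \<longlongrightarrow> 1) at_top"
    using sv[unfolded slowly_varying_def, rule_format, of 2] by simp
  then have "((\<lambda>u. p u / p (2 * u)) \<longlongrightarrow> 1) at_top"
    by (simp add: mult.commute)
  then have "\<forall>\<^sub>F u in at_top. p u / p (2 * u) < 1 + \<eta>"
    using assms by (intro order_tendstoD(2)) auto
  then show ?thesis
    by eventually_elim (use pos in \<open>simp add: field_simps\<close>)
qed

lemma scaled_filterlim_at_right_0:
  assumes "0 < a" shows "filterlim (\<lambda>x. p x / a) (at_right 0) at_top"
  using assms pos tendsto_zero
  by (intro tendsto_imp_filterlim_at_right) (auto intro: tendsto_divide_zero)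

lemma sublevel_set_threshold:
  assumes "0 < \<eta>"
  shows "\<forall>\<^sub>F c in at_right 0. \<exists>s. (\<forall>t. p t < c \<longrightarrow> s < t) \<and> p s < (1 + \<eta>) * c"
proof -
  obtain U where U: "\<And>u. U \<le> u \<Longrightarrow> p (u / 2) < (1 + \<eta>) * p u"
    using eventually_half_less[OF assms] unfolding eventually_at_top_linorder by blast
  define V where "V = max U 1"
  have "\<exists>s. (\<forall>t. p t < c \<longrightarrow> s < t) \<and> p s < (1 + \<eta>) * c" if c: "0 < c" "c < p V" for c
  proof -
    define S where "S = {t. p t < c}"
    have "S \<noteq> {}"
      using order_tendstoD(2)[OF tendsto_zero c(1)] by (auto simp: S_def eventually_at_top_linorder)
    have V_less: "V < t" if "t \<in> S" for t
      using that c antimono[of t V] by (force simp: S_def)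
    then have "bdd_below S"
      by (meson bdd_belowI less_imp_le)
    have "V \<le> Inf S"
      using \<open>S \<noteq> {}\<close> V_less by (intro cInf_greatest) (auto intro: less_imp_le)
    then have "Inf S < 3/2 * Inf S"
      by (simp add: V_def)
    then obtain t where t: "t \<in> S" "t < 3/2 * Inf S"
      using cInf_lessD[OF \<open>S \<noteq> {}\<close>] by blast
    have "Inf S \<le> t"
      using t(1) \<open>bdd_below S\<close> by (rule cInf_lower)
    show ?thesis
    proof (intro exI conjI allI impI)
      fix t' assume "p t' < c"
      then have "Inf S \<le> t'"
        using \<open>bdd_below S\<close> by (intro cInf_lower) (auto simp: S_def)
      then show "t / 2 < t'"
        using t(2) \<open>V \<le> Inf S\<close> by (simp add: V_def)
    next
      have "p (t / 2) < (1 + \<eta>) * p t"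
        using \<open>V \<le> Inf S\<close> \<open>Inf S \<le> t\<close> by (intro U) (simp add: V_def)
      also have "\<dots> < (1 + \<eta>) * c"
        using t(1) assms by (simp add: S_def)
      finally show "p (t / 2) < (1 + \<eta>) * c" .
    qed
  qed
  then show ?thesis
    using pos[of V] unfolding eventually_at_right_field by blast
qed

lemma superlevel_set_threshold:
  assumes "0 < \<eta>"
  shows "\<forall>\<^sub>F c in at_right 0. \<exists>r. (\<forall>t. c < p t \<longrightarrow> t \<le> r) \<and> c < (1 + \<eta>) * p r"
proof -
  obtain U where U: "\<And>u. U \<le> u \<Longrightarrow> p u < (1 + \<eta>) * p (2 * u)"
    using eventually_less_double[OF assms] unfolding eventually_at_top_linorder by blast
  define V where "V = max (2 * U) 1"
  have "\<exists>r. (\<forall>t. c < p t \<longrightarrow> t \<le> r) \<and> c < (1 + \<eta>) * p r" if c: "0 < c" "c < p V" for c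
  proof -
    define D where "D = {t. c < p t}"
    obtain T where T: "\<And>t. T \<le> t \<Longrightarrow> p t < c"
      using order_tendstoD(2)[OF tendsto_zero c(1)] by (auto simp: eventually_at_top_linorder)
    have "V \<in> D"
      using c by (simp add: D_def)
    have "t \<le> T" if "t \<in> D" for t
      using that T[of t] by (cases "T \<le> t") (auto simp: D_def)
    then have "bdd_above D"
      by (rule bdd_aboveI)
    have "V \<le> Sup D"
      using \<open>V \<in> D\<close> \<open>bdd_above D\<close> by (rule cSup_upper)
    then have "Sup D / 2 < Sup D"
      by (simp add: V_def)
    then obtain t where t: "t \<in> D" "Sup D / 2 < t"
      using less_cSupD[of D] \<open>V \<in> D\<close> by blast
    show ?thesis
    proof (intro exI conjI allI impI)
      fix t' assume "c < p t'"
      then have "t' \<le> Sup D"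
        using \<open>bdd_above D\<close> by (intro cSup_upper) (auto simp: D_def)
      then show "t' \<le> 2 * t"
        using t(2) by linarith
    next
      have "c < p t"
        using t(1) by (simp add: D_def)
      also have "\<dots> < (1 + \<eta>) * p (2 * t)"
        using \<open>V \<le> Sup D\<close> t(2) by (intro U) (simp add: V_def)
      finally show "c < (1 + \<eta>) * p (2 * t)" .
    qed
  qed
  then show ?thesis
    using pos[of V] unfolding eventually_at_right_field by blast
qed

end

lemma arg_max_lessThan:
  fixes f :: "nat \<Rightarrow> 'b::linorder"
  assumes "0 < n"
  shows "(ARG_MAX f i. i < n) < n" and "j < n \<Longrightarrow> f j \<le> f (ARG_MAX f i. i < n)"
proof -
  have fin: "finite (f ` {..<n})" and ne: "f ` {..<n} \<noteq> {}"
    using assms by auto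
  obtain k where k: "k < n" "f k = Max (f ` {..<n})"
    using Max_in[OF fin ne] by auto
  have "(ARG_MAX f i. i < n) < n \<and> (\<forall>j<n. f j \<le> f (ARG_MAX f i. i < n))"
    by (rule arg_maxI[where x = k]) (use k Max_ge[OF fin] in \<open>auto simp: not_less\<close>)
  then show "(ARG_MAX f i. i < n) < n" and "j < n \<Longrightarrow> f j \<le> f (ARG_MAX f i. i < n)"
    by auto
qed

lemma less_first_exceed: "j < first_exceed \<sigma> x \<omega> \<Longrightarrow> \<sigma> j \<omega> \<le> x"
  unfolding first_exceed_def using not_less_Least[of j "\<lambda>i. x < \<sigma> i \<omega>"] by simp

lemma first_exceed_le: "x < \<sigma> i \<omega> \<Longrightarrow> first_exceed \<sigma> x \<omega> \<le> i"
  unfolding first_exceed_def by (rule Least_le)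

lemma exceeds_at_first_exceed: "x < \<sigma> i \<omega> \<Longrightarrow> x < \<sigma> (first_exceed \<sigma> x \<omega>) \<omega>"
  unfolding first_exceed_def by (rule LeastI)

lemma prev_argmax_less_first_exceed:
  "0 < first_exceed \<sigma> x \<omega> \<Longrightarrow> prev_argmax \<sigma> x \<omega> < first_exceed \<sigma> x \<omega>"
  unfolding prev_argmax_def by (rule arg_max_lessThan)

lemma le_prev_argmax:
  "j < first_exceed \<sigma> x \<omega> \<Longrightarrow> \<sigma> j \<omega> \<le> \<sigma> (prev_argmax \<sigma> x \<omega>) \<omega>"
  unfolding prev_argmax_def by (rule arg_max_lessThan) auto

locale iid_sequence = prob_space M for M :: "'a measure" +
  fixes \<sigma> :: "nat \<Rightarrow> 'a \<Rightarrow> real"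
  assumes indep: "indep_vars (\<lambda>_. borel) \<sigma> UNIV"
    and ident: "\<And>i. distr M borel (\<sigma> i) = distr M borel (\<sigma> 0)"
begin

definition law :: "real set \<Rightarrow> real" where
  "law A = prob (\<sigma> 0 -` A \<inter> space M)"

definition tail :: "real \<Rightarrow> real" where
  "tail x = prob {\<omega> \<in> space M. x < \<sigma> 0 \<omega>}"

definition reaches_through :: "real set \<Rightarrow> real set \<Rightarrow> 'a set" where
  "reaches_through A B = {\<omega> \<in> space M. \<exists>i. (\<forall>j<i. \<sigma> j \<omega> \<in> A) \<and> \<sigma> i \<omega> \<in> B}"

lemma measurable_sequence [measurable]: "\<sigma> i \<in> borel_measurable M"
  using indep unfolding indep_vars_def2 by auto

lemma prob_vimage_eq_law: "A \<in> sets borel \<Longrightarrow> prob (\<sigma> i -` A \<inter> space M) = law A"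
  using ident[of i] unfolding law_def
  by (metis measurable_sequence measure_distr sets_borel)

lemma prob_all_in:
  assumes "\<And>j. A j \<in> sets borel"
  shows "prob {\<omega> \<in> space M. \<forall>j<n. \<sigma> j \<omega> \<in> A j} = (\<Prod>j<n. law (A j))"
proof (cases "n = 0")
  case False
  have "{\<omega> \<in> space M. \<forall>j<n. \<sigma> j \<omega> \<in> A j} = (\<Inter>j\<in>{..<n}. \<sigma> j -` A j \<inter> space M)"
    using False by auto
  also have "prob \<dots> = (\<Prod>j<n. prob (\<sigma> j -` A j \<inter> space M))"
    using False assms by (intro indep_varsD[OF indep]) auto
  finally show ?thesis
    using assms by (simp add: prob_vimage_eq_law)
qed (simp add: prob_space)

lemma law_greaterThan: "law {x<..} = tail x"
  unfolding law_def tail_def by (rule arg_cong[where f = prob]) auto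

lemma law_atMost: "law {..x} = 1 - tail x"
proof -
  have "\<sigma> 0 -` {..x} \<inter> space M = space M - {\<omega> \<in> space M. x < \<sigma> 0 \<omega>}"
    by auto
  then show ?thesis
    unfolding law_def tail_def by (simp add: prob_compl)
qed

lemma law_greaterThanAtMost: "x \<le> y \<Longrightarrow> law {x<..y} = tail x - tail y"
proof -
  assume "x \<le> y"
  have "\<sigma> 0 -` {x<..y} \<inter> space M
      = {\<omega> \<in> space M. x < \<sigma> 0 \<omega>} - {\<omega> \<in> space M. y < \<sigma> 0 \<omega>}"
    by auto
  then show ?thesis
    unfolding law_def tail_def using \<open>x \<le> y\<close> by (simp only:) (rule finite_measure_Diff; auto)
qed

lemma tail_antimono: "x \<le> y \<Longrightarrow> tail y \<le> tail x"
  unfolding tail_def by (rule finite_measure_mono) auto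

lemma tail_tendsto_zero: "(tail \<longlongrightarrow> 0) at_top"
proof -
  interpret D: real_distribution "distr M borel (\<sigma> 0)"
    by simp
  have "cdf (distr M borel (\<sigma> 0)) = (\<lambda>x. 1 - tail x)"
    by (auto simp: cdf_def measure_distr law_atMost[unfolded law_def])
  then have "((\<lambda>x. 1 - (1 - tail x)) \<longlongrightarrow> 1 - 1) at_top"
    using D.cdf_lim_at_top_prob by (intro tendsto_intros) simp
  then show ?thesis
    by simp
qed

lemma reaches_through_eq_UN:
  "reaches_through A B
    = (\<Union>i. {\<omega> \<in> space M. \<forall>j<Suc i. \<sigma> j \<omega> \<in> (if j = i then B else A)})"
  unfolding reaches_through_def by (auto simp: less_Suc_eq)

lemma all_in_events:
  assumes "\<And>j. A j \<in> sets borel"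
  shows "{\<omega> \<in> space M. \<forall>j<n. \<sigma> j \<omega> \<in> A j} \<in> events"
proof -
  have "{\<omega> \<in> space M. \<forall>j<n. \<sigma> j \<omega> \<in> A j} = space M \<inter> (\<Inter>j<n. \<sigma> j -` A j \<inter> space M)"
    by auto
  also have "\<dots> \<in> events"
    using assms by (cases "n = 0") (auto intro!: sets.Int sets.countable_INT')
  finally show ?thesis .
qed

lemma reaches_through_in_events:
  "A \<in> sets borel \<Longrightarrow> B \<in> sets borel \<Longrightarrow> reaches_through A B \<in> events"
  unfolding reaches_through_eq_UN by (intro sets.countable_UN all_in_events) auto

lemma prob_reaches_through_le:
  assumes A: "A \<in> sets borel" and B: "B \<in> sets borel" and "law A < 1"
  shows "prob (reaches_through A B) \<le> law B / (1 - law A)"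
proof -
  define E where "E i = {\<omega> \<in> space M. \<forall>j<Suc i. \<sigma> j \<omega> \<in> (if j = i then B else A)}" for i
  have prob_E: "prob (E i) = law B * law A ^ i" for i
    unfolding E_def using A B by (subst prob_all_in) auto
  have "(\<lambda>i. law A ^ i) sums (1 / (1 - law A))"
    using geometric_sums[of "law A"] assms(3) by (simp add: law_def)
  then have sums: "(\<lambda>i. prob (E i)) sums (law B * (1 / (1 - law A)))"
    unfolding prob_E by (rule sums_mult)
  have "range E \<subseteq> events"
    unfolding E_def using A B by (auto intro: all_in_events)
  then have "prob (\<Union>i. E i) \<le> (\<Sum>i. prob (E i))"
    using sums by (intro finite_measure_subadditive_countably) (auto simp: sums_iff)
  then show ?thesis
    using sums unfolding reaches_through_eq_UN E_def by (simp add: sums_iff)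
qed

lemma first_exceed_in_reaches_through:
  "\<omega> \<in> space M \<Longrightarrow> \<sigma> (first_exceed \<sigma> a \<omega>) \<omega> \<in> B \<Longrightarrow> \<omega> \<in> reaches_through {..a} B"
  unfolding reaches_through_def using less_first_exceed[of _ \<sigma> a \<omega>] by auto

lemma prev_argmax_le_in_reaches_through:
  "\<omega> \<in> space M \<Longrightarrow> x < \<sigma> (first_exceed \<sigma> x \<omega>) \<omega> \<Longrightarrow> \<sigma> (prev_argmax \<sigma> x \<omega>) \<omega> \<le> r
    \<Longrightarrow> \<omega> \<in> reaches_through {..r} {x<..}"
  unfolding reaches_through_def using le_prev_argmax[of _ \<sigma> x \<omega>]
  by (fastforce intro!: exI[of _ "first_exceed \<sigma> x \<omega>"])

lemma prev_argmax_gt_in_reaches_through: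
  assumes "\<omega> \<in> space M" "0 < first_exceed \<sigma> x \<omega>" "s < \<sigma> (prev_argmax \<sigma> x \<omega>) \<omega>"
  shows "\<omega> \<in> reaches_through {..s} {s<..x}"
proof -
  have "first_exceed \<sigma> s \<omega> < first_exceed \<sigma> x \<omega>"
    using first_exceed_le[of s \<sigma> _ \<omega>, OF assms(3)] prev_argmax_less_first_exceed[OF assms(2)]
    by linarith
  then have "\<sigma> (first_exceed \<sigma> s \<omega>) \<omega> \<in> {s<..x}"
    using exceeds_at_first_exceed[of s \<sigma> _ \<omega>, OF assms(3)] less_first_exceed by auto
  with assms(1) show ?thesis
    by (rule first_exceed_in_reaches_through)
qed

lemma AE_exceeds:
  assumes "0 < tail x"
  shows "AE \<omega> in M. \<exists>i. x < \<sigma> i \<omega>"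
proof (rule AE_I')
  let ?N = "{\<omega> \<in> space M. \<forall>i. \<sigma> i \<omega> \<le> x}"
  have "prob ?N \<le> (1 - tail x) ^ n" for n
  proof -
    have "prob ?N \<le> prob {\<omega> \<in> space M. \<forall>j<n. \<sigma> j \<omega> \<in> {..x}}"
      by (intro finite_measure_mono all_in_events) auto
    also have "\<dots> = (1 - tail x) ^ n"
      using prob_all_in[of "\<lambda>_. {..x}" n] by (simp add: law_atMost)
    finally show ?thesis .
  qed
  moreover have "(\<lambda>n. (1 - tail x) ^ n) \<longlonglongrightarrow> 0"
    using assms tail_def by (intro LIMSEQ_power_zero) auto
  ultimately have "prob ?N \<le> 0"
    by (intro tendsto_lowerbound[OF _ always_eventually trivial_limit_sequentially]) auto
  moreover have "?N \<in> events"
    by measurable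
  ultimately show "?N \<in> null_sets M"
    by (auto simp: null_sets_def measure_le_0_iff emeasure_eq_measure)
qed (auto simp: not_less)

end

locale iid_slowly_varying = iid_sequence +
  assumes sv: "slowly_varying (tailL M (\<sigma> 0))"
begin

abbreviation L :: "real \<Rightarrow> real" where
  "L \<equiv> tailL M (\<sigma> 0)"

lemma L_eq: "L u = 1 / tail u"
  unfolding tailL_def tail_def ..

sublocale tail: slowly_varying_tail tail
proof
  show "0 < tail u" for u
    using sv unfolding L_eq[abs_def]
    by (intro slowly_varying_inverse_pos[of tail] tail_antimono) (simp_all add: tail_def)
qed (use tail_antimono tail_tendsto_zero sv L_eq[abs_def] in auto)

lemma L_ratio: "L a / L b = tail b / tail a"
  using tail.pos[of a] tail.pos[of b] by (simp add: L_eq)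

lemma prob_le_if_exceeds:
  assumes "B \<in> events"
    and "\<And>\<omega>. \<omega> \<in> space M \<Longrightarrow> x < \<sigma> (first_exceed \<sigma> x \<omega>) \<omega> \<Longrightarrow> P \<omega> \<Longrightarrow> \<omega> \<in> B"
  shows "prob {\<omega> \<in> space M. P \<omega>} \<le> prob B"
  using AE_exceeds[OF tail.pos[of x]] assms(2)
  by (intro finite_measure_mono_AE[OF _ assms(1)]) (auto elim!: AE_mp intro: exceeds_at_first_exceed)

lemma prob_reaches_through_atMost_le:
  "B \<in> sets borel \<Longrightarrow> prob (reaches_through {..a} B) \<le> law B / tail a"
  using prob_reaches_through_le[of "{..a}" B] tail.pos[of a] by (simp add: law_atMost)

lemma first_exceed_scaled_bdd_above:
  "bdd_above_in_prob M (\<lambda>x \<omega>. real (first_exceed \<sigma> x \<omega>) / L x)"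
  unfolding bdd_above_in_prob_def
proof (intro allI impI exI always_eventually)
  fix \<epsilon> x :: real assume "0 < \<epsilon>"
  define n where "n = nat \<lceil>(1 / \<epsilon>) / tail x\<rceil>"
  have "(1 / \<epsilon>) / tail x \<le> n"
    unfolding n_def by (rule real_nat_ceiling_ge)
  then have "n * tail x \<ge> 1 / \<epsilon>"
    using tail.pos[of x] \<open>0 < \<epsilon>\<close> by (simp add: field_simps)
  have "prob {\<omega> \<in> space M. 1 / \<epsilon> < real (first_exceed \<sigma> x \<omega>) / L x}
      \<le> prob {\<omega> \<in> space M. \<forall>j<n. \<sigma> j \<omega> \<in> {..x}}"
  proof (intro finite_measure_mono all_in_events subsetI)
    fix \<omega> assume "\<omega> \<in> {\<omega> \<in> space M. 1 / \<epsilon> < real (first_exceed \<sigma> x \<omega>) / L x}"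
    then have "(1 / \<epsilon>) / tail x < first_exceed \<sigma> x \<omega>"
      using tail.pos[of x] \<open>0 < \<epsilon>\<close> by (simp add: L_eq field_simps)
    then have "n \<le> first_exceed \<sigma> x \<omega>"
      unfolding n_def by linarith
    then show "\<omega> \<in> {\<omega> \<in> space M. \<forall>j<n. \<sigma> j \<omega> \<in> {..x}}"
      using \<open>\<omega> \<in> _\<close> by (auto intro: less_first_exceed order.strict_trans2)
  qed auto
  also have "\<dots> = (1 - tail x) ^ n"
    using prob_all_in[of "\<lambda>_. {..x}" n] by (simp add: law_atMost)
  also have "\<dots> \<le> exp (- tail x) ^ n"
    using exp_ge_add_one_self[of "- tail x"] prob_le_1[of "{\<omega> \<in> space M. x < \<sigma> 0 \<omega>}"]
    by (intro power_mono) (auto simp: tail_def)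
  also have "\<dots> \<le> exp (- (1 / \<epsilon>))"
    using \<open>n * tail x \<ge> 1 / \<epsilon>\<close> by (simp add: exp_of_nat_mult[symmetric])
  also have "\<dots> < \<epsilon>"
  proof -
    have "1 / \<epsilon> < exp (1 / \<epsilon>)"
      using exp_ge_add_one_self[of "1 / \<epsilon>"] by linarith
    then show ?thesis
      using \<open>0 < \<epsilon>\<close> by (simp add: exp_minus field_simps)
  qed
  finally show "prob {\<omega> \<in> space M. 1 / \<epsilon> < real (first_exceed \<sigma> x \<omega>) / L x} < \<epsilon>" .
qed

lemma first_exceed_scaled_bdd_below:
  "bdd_below_in_prob M (\<lambda>x \<omega>. real (first_exceed \<sigma> x \<omega>) / L x)"
  unfolding bdd_below_in_prob_def
proof (intro allI impI exI conjI)
  fix \<epsilon> :: real assume "0 < \<epsilon>"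
  then show "0 < \<epsilon> / 2" by simp
  show "\<forall>\<^sub>F x in at_top. prob {\<omega> \<in> space M. real (first_exceed \<sigma> x \<omega>) / L x < \<epsilon> / 2} < \<epsilon>"
    using order_tendstoD(2)[OF tail_tendsto_zero \<open>0 < \<epsilon> / 2\<close>]
  proof eventually_elim
    case (elim x)
    define n where "n = nat \<lceil>(\<epsilon> / 2) / tail x\<rceil>"
    have "prob {\<omega> \<in> space M. real (first_exceed \<sigma> x \<omega>) / L x < \<epsilon> / 2}
        \<le> prob (\<Union>i<n. \<sigma> i -` {x<..} \<inter> space M)"
    proof (rule prob_le_if_exceeds)
      fix \<omega> assume "\<omega> \<in> space M" "x < \<sigma> (first_exceed \<sigma> x \<omega>) \<omega>"
        and "real (first_exceed \<sigma> x \<omega>) / L x < \<epsilon> / 2"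
      then have "first_exceed \<sigma> x \<omega> < (\<epsilon> / 2) / tail x"
        using tail.pos[of x] by (simp add: L_eq field_simps)
      then have "first_exceed \<sigma> x \<omega> < n"
        unfolding n_def by linarith
      then show "\<omega> \<in> (\<Union>i<n. \<sigma> i -` {x<..} \<inter> space M)"
        using \<open>\<omega> \<in> space M\<close> \<open>x < \<sigma> _ \<omega>\<close> by auto
    qed auto
    also have "\<dots> \<le> (\<Sum>i<n. prob (\<sigma> i -` {x<..} \<inter> space M))"
      by (rule finite_measure_subadditive_finite) auto
    also have "\<dots> = n * tail x"
      by (simp add: prob_vimage_eq_law law_greaterThan)
    also have "\<dots> < ((\<epsilon> / 2) / tail x + 1) * tail x"
    proof (intro mult_strict_right_mono tail.pos)
      have "0 < (\<epsilon> / 2) / tail x"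
        using tail.pos[of x] \<open>0 < \<epsilon>\<close> by simp
      then show "real n < (\<epsilon> / 2) / tail x + 1"
        unfolding n_def by linarith
    qed
    also have "\<dots> = \<epsilon> / 2 + tail x"
      using tail.pos[of x] by (simp add: field_simps)
    finally show ?case
      using elim by linarith
  qed
qed

lemma overshoot_ratio_bdd_above:
  "bdd_above_in_prob M (\<lambda>x \<omega>. L (\<sigma> (first_exceed \<sigma> x \<omega>) \<omega>) / L x - 1)"
  unfolding bdd_above_in_prob_def
proof (intro allI impI exI)
  fix \<epsilon> :: real assume "0 < \<epsilon>"
  define K where "K = 2 / \<epsilon>"
  have "0 < K + 1"
    using \<open>0 < \<epsilon>\<close> by (simp add: K_def add_pos_pos)
  have "\<forall>\<^sub>F x in at_top. \<exists>s. (\<forall>t. tail t < tail x / (K + 1) \<longrightarrow> s < t)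
      \<and> tail s < (1 + 1) * (tail x / (K + 1))"
    by (rule eventually_compose_filterlim[OF tail.sublevel_set_threshold
          tail.scaled_filterlim_at_right_0[OF \<open>0 < K + 1\<close>]]) simp
  then show "\<forall>\<^sub>F x in at_top.
      prob {\<omega> \<in> space M. K < L (\<sigma> (first_exceed \<sigma> x \<omega>) \<omega>) / L x - 1} < \<epsilon>"
  proof eventually_elim
    case (elim x)
    then obtain s where s: "\<And>t. tail t < tail x / (K + 1) \<Longrightarrow> s < t"
      and tail_s: "tail s < 2 * (tail x / (K + 1))"
      by auto
    have "prob {\<omega> \<in> space M. K < L (\<sigma> (first_exceed \<sigma> x \<omega>) \<omega>) / L x - 1}
        \<le> prob (reaches_through {..x} {s<..})"
    proof (rule prob_le_if_exceeds[OF reaches_through_in_events])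
      fix \<omega> assume "\<omega> \<in> space M" and "K < L (\<sigma> (first_exceed \<sigma> x \<omega>) \<omega>) / L x - 1"
      then have "tail (\<sigma> (first_exceed \<sigma> x \<omega>) \<omega>) < tail x / (K + 1)"
        using tail.pos \<open>0 < K + 1\<close> by (simp add: L_ratio field_simps)
      then have "s < \<sigma> (first_exceed \<sigma> x \<omega>) \<omega>"
        by (rule s)
      then show "\<omega> \<in> reaches_through {..x} {s<..}"
        using \<open>\<omega> \<in> space M\<close> by (intro first_exceed_in_reaches_through) auto
    qed auto
    also have "\<dots> \<le> tail s / tail x"
      using prob_reaches_through_atMost_le[of "{s<..}" x] by (simp add: law_greaterThan)
    also have "\<dots> < 2 / (K + 1)"
      using tail_s tail.pos[of x] by (simp add: field_simps)
    also have "\<dots> < \<epsilon>"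
      using \<open>0 < \<epsilon>\<close> by (simp add: K_def field_simps)
    finally show ?case .
  qed
qed

lemma overshoot_ratio_bdd_below:
  "bdd_below_in_prob M (\<lambda>x \<omega>. L (\<sigma> (first_exceed \<sigma> x \<omega>) \<omega>) / L x - 1)"
  unfolding bdd_below_in_prob_def
proof (intro allI impI exI conjI)
  fix \<epsilon> :: real assume "0 < \<epsilon>"
  define d where "d = \<epsilon> / 2"
  show "0 < d"
    using \<open>0 < \<epsilon>\<close> by (simp add: d_def)
  have "\<forall>\<^sub>F x in at_top. \<exists>r. (\<forall>t. tail x / (1 + d) < tail t \<longrightarrow> t \<le> r)
      \<and> tail x / (1 + d) < (1 + d) * tail r"
    using \<open>0 < d\<close> by (intro eventually_compose_filterlim[OF tail.superlevel_set_threshold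
          tail.scaled_filterlim_at_right_0]) simp_all
  then show "\<forall>\<^sub>F x in at_top.
      prob {\<omega> \<in> space M. L (\<sigma> (first_exceed \<sigma> x \<omega>) \<omega>) / L x - 1 < d} < \<epsilon>"
  proof eventually_elim
    case (elim x)
    then obtain r where r: "\<And>t. tail x / (1 + d) < tail t \<Longrightarrow> t \<le> r"
      and tail_r: "tail x / (1 + d) < (1 + d) * tail r"
      by auto
    have "x \<le> r"
      using tail.pos[of x] \<open>0 < d\<close> by (intro r) (simp add: field_simps)
    have "prob {\<omega> \<in> space M. L (\<sigma> (first_exceed \<sigma> x \<omega>) \<omega>) / L x - 1 < d}
        \<le> prob (reaches_through {..x} {x<..r})"
    proof (rule prob_le_if_exceeds[OF reaches_through_in_events])
      fix \<omega> assume \<omega>: "\<omega> \<in> space M" "x < \<sigma> (first_exceed \<sigma> x \<omega>) \<omega>"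
        and "L (\<sigma> (first_exceed \<sigma> x \<omega>) \<omega>) / L x - 1 < d"
      then have "tail x / (1 + d) < tail (\<sigma> (first_exceed \<sigma> x \<omega>) \<omega>)"
        using tail.pos \<open>0 < d\<close> by (simp add: L_ratio field_simps)
      then have "\<sigma> (first_exceed \<sigma> x \<omega>) \<omega> \<le> r"
        by (rule r)
      then show "\<omega> \<in> reaches_through {..x} {x<..r}"
        using \<omega> by (intro first_exceed_in_reaches_through) auto
    qed auto
    also have "\<dots> \<le> (tail x - tail r) / tail x"
      using prob_reaches_through_atMost_le[of "{x<..r}" x] \<open>x \<le> r\<close>
      by (simp add: law_greaterThanAtMost)
    also have "\<dots> < 2 * d"
      using tail_r tail.pos[of x] \<open>0 < d\<close>
      by (intro relative_gap_less) (simp_all add: field_simps power2_eq_square)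
    finally show ?case
      by (simp add: d_def)
  qed
qed

lemma prev_argmax_ratio_bdd_above:
  "bdd_above_in_prob M (\<lambda>x \<omega>. L (\<sigma> (prev_argmax \<sigma> x \<omega>) \<omega>) / L x)"
  unfolding bdd_above_in_prob_def
proof (intro allI impI exI)
  fix \<epsilon> :: real assume "0 < \<epsilon>"
  show "\<forall>\<^sub>F x in at_top. prob {\<omega> \<in> space M. 1 < L (\<sigma> (prev_argmax \<sigma> x \<omega>) \<omega>) / L x} < \<epsilon>"
    using order_tendstoD(2)[OF tail_tendsto_zero \<open>0 < \<epsilon>\<close>]
  proof eventually_elim
    case (elim x)
    have "prob {\<omega> \<in> space M. 1 < L (\<sigma> (prev_argmax \<sigma> x \<omega>) \<omega>) / L x}
        \<le> prob {\<omega> \<in> space M. x < \<sigma> 0 \<omega>}"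
    proof (rule prob_le_if_exceeds)
      fix \<omega> assume "x < \<sigma> (first_exceed \<sigma> x \<omega>) \<omega>"
        and ratio: "1 < L (\<sigma> (prev_argmax \<sigma> x \<omega>) \<omega>) / L x"
      have "first_exceed \<sigma> x \<omega> = 0"
      proof (rule ccontr)
        assume "first_exceed \<sigma> x \<omega> \<noteq> 0"
        then have "\<sigma> (prev_argmax \<sigma> x \<omega>) \<omega> \<le> x"
          by (intro less_first_exceed prev_argmax_less_first_exceed) simp
        from tail_antimono[OF this] show False
          using ratio tail.pos by (simp add: L_ratio field_simps)
      qed
      then show "\<omega> \<in> {\<omega> \<in> space M. x < \<sigma> 0 \<omega>}" if "\<omega> \<in> space M"
        using that \<open>x < \<sigma> (first_exceed \<sigma> x \<omega>) \<omega>\<close> by simp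
    qed auto
    then show ?case
      using elim by (simp add: tail_def)
  qed
qed

lemma prev_argmax_ratio_bdd_below:
  "bdd_below_in_prob M (\<lambda>x \<omega>. L (\<sigma> (prev_argmax \<sigma> x \<omega>) \<omega>) / L x)"
  unfolding bdd_below_in_prob_def
proof (intro allI impI exI conjI)
  fix \<epsilon> :: real assume "0 < \<epsilon>"
  define d where "d = \<epsilon> / 2"
  show "0 < d"
    using \<open>0 < \<epsilon>\<close> by (simp add: d_def)
  have "\<forall>\<^sub>F x in at_top. \<exists>r. (\<forall>t. tail x / d < tail t \<longrightarrow> t \<le> r)
      \<and> tail x / d < (1 + 1) * tail r"
    by (rule eventually_compose_filterlim[OF tail.superlevel_set_threshold
          tail.scaled_filterlim_at_right_0[OF \<open>0 < d\<close>]]) simp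
  then show "\<forall>\<^sub>F x in at_top.
      prob {\<omega> \<in> space M. L (\<sigma> (prev_argmax \<sigma> x \<omega>) \<omega>) / L x < d} < \<epsilon>"
  proof eventually_elim
    case (elim x)
    then obtain r where r: "\<And>t. tail x / d < tail t \<Longrightarrow> t \<le> r"
      and tail_r: "tail x / d < 2 * tail r"
      by auto
    have "prob {\<omega> \<in> space M. L (\<sigma> (prev_argmax \<sigma> x \<omega>) \<omega>) / L x < d}
        \<le> prob (reaches_through {..r} {x<..})"
    proof (rule prob_le_if_exceeds[OF reaches_through_in_events])
      fix \<omega> assume \<omega>: "\<omega> \<in> space M" "x < \<sigma> (first_exceed \<sigma> x \<omega>) \<omega>"
        and "L (\<sigma> (prev_argmax \<sigma> x \<omega>) \<omega>) / L x < d"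
      then have "tail x / d < tail (\<sigma> (prev_argmax \<sigma> x \<omega>) \<omega>)"
        using tail.pos \<open>0 < d\<close> by (simp add: L_ratio field_simps)
      then show "\<omega> \<in> reaches_through {..r} {x<..}"
        using \<omega> r by (simp add: prev_argmax_le_in_reaches_through)
    qed auto
    also have "\<dots> \<le> tail x / tail r"
      using prob_reaches_through_atMost_le[of "{x<..}" r] by (simp add: law_greaterThan)
    also have "\<dots> < 2 * d"
      using tail_r tail.pos[of r] \<open>0 < d\<close> by (simp add: field_simps)
    finally show ?case
      by (simp add: d_def)
  qed
qed

lemma prev_argmax_gap_bdd_above:
  "bdd_above_in_prob M (\<lambda>x \<omega>. 1 - L (\<sigma> (prev_argmax \<sigma> x \<omega>) \<omega>) / L x)"
  unfolding bdd_above_in_prob_def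
proof (intro allI impI exI always_eventually allI)
  fix \<epsilon> x :: real assume "0 < \<epsilon>"
  have empty: "{\<omega> \<in> space M. 1 < 1 - L (\<sigma> (prev_argmax \<sigma> x \<omega>) \<omega>) / L x} = {}"
    using tail.pos by (auto simp: L_ratio not_less intro: less_imp_le)
  show "prob {\<omega> \<in> space M. 1 < 1 - L (\<sigma> (prev_argmax \<sigma> x \<omega>) \<omega>) / L x} < \<epsilon>"
    unfolding empty using \<open>0 < \<epsilon>\<close> by simp
qed

lemma prev_argmax_gap_bdd_below:
  "bdd_below_in_prob M (\<lambda>x \<omega>. 1 - L (\<sigma> (prev_argmax \<sigma> x \<omega>) \<omega>) / L x)"
  unfolding bdd_below_in_prob_def
proof (intro allI impI exI conjI)
  fix \<epsilon> :: real assume "0 < \<epsilon>"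
  define d where "d = \<epsilon> / 4"
  define \<delta> where "\<delta> = d / (1 + d)"
  have "0 < d" "0 < \<delta>" "0 < 1 - \<delta>"
    using \<open>0 < \<epsilon>\<close> by (simp_all add: d_def \<delta>_def field_simps)
  then show "0 < \<delta>" by simp
  have "\<forall>\<^sub>F x in at_top. \<exists>s. (\<forall>t. tail t < tail x / (1 - \<delta>) \<longrightarrow> s < t)
      \<and> tail s < (1 + d) * (tail x / (1 - \<delta>))"
    by (rule eventually_compose_filterlim[OF tail.sublevel_set_threshold
          tail.scaled_filterlim_at_right_0]) (use \<open>0 < d\<close> \<open>0 < 1 - \<delta>\<close> in simp_all)
  moreover have "\<forall>\<^sub>F x in at_top. tail x < \<epsilon> / 2"
    using \<open>0 < \<epsilon>\<close> by (intro order_tendstoD(2)[OF tail_tendsto_zero]) simp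
  ultimately show "\<forall>\<^sub>F x in at_top.
      prob {\<omega> \<in> space M. 1 - L (\<sigma> (prev_argmax \<sigma> x \<omega>) \<omega>) / L x < \<delta>} < \<epsilon>"
  proof eventually_elim
    case (elim x)
    then obtain s where s: "\<And>t. tail t < tail x / (1 - \<delta>) \<Longrightarrow> s < t"
      and tail_s: "tail s < (1 + d) * (tail x / (1 - \<delta>))"
      by auto
    have "s < x"
      using tail.pos[of x] \<open>0 < \<delta>\<close> \<open>0 < 1 - \<delta>\<close> by (intro s) (simp add: field_simps)
    have "prob {\<omega> \<in> space M. 1 - L (\<sigma> (prev_argmax \<sigma> x \<omega>) \<omega>) / L x < \<delta>}
        \<le> prob ({\<omega> \<in> space M. x < \<sigma> 0 \<omega>} \<union> reaches_through {..s} {s<..x})"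
    proof (rule prob_le_if_exceeds)
      fix \<omega> assume \<omega>: "\<omega> \<in> space M" "x < \<sigma> (first_exceed \<sigma> x \<omega>) \<omega>"
        and gap: "1 - L (\<sigma> (prev_argmax \<sigma> x \<omega>) \<omega>) / L x < \<delta>"
      show "\<omega> \<in> {\<omega> \<in> space M. x < \<sigma> 0 \<omega>} \<union> reaches_through {..s} {s<..x}"
      proof (cases "first_exceed \<sigma> x \<omega> = 0")
        case False
        have "1 - \<delta> < tail x / tail (\<sigma> (prev_argmax \<sigma> x \<omega>) \<omega>)"
          using gap by (simp add: L_ratio)
        then have "tail (\<sigma> (prev_argmax \<sigma> x \<omega>) \<omega>) < tail x / (1 - \<delta>)"
          using tail.pos \<open>0 < 1 - \<delta>\<close> by (simp add: pos_less_divide_eq mult.commute)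
        then show ?thesis
          using \<omega> False s by (simp add: prev_argmax_gt_in_reaches_through)
      qed (use \<omega> in simp)
    qed (intro sets.Un reaches_through_in_events; simp)
    also have "\<dots> \<le> tail x + prob (reaches_through {..s} {s<..x})"
      using measure_Un_le[of _ M] reaches_through_in_events[of "{..s}" "{s<..x}"]
      by (fastforce simp: tail_def)
    also have "prob (reaches_through {..s} {s<..x}) \<le> (tail s - tail x) / tail s"
      using prob_reaches_through_atMost_le[of "{s<..x}" s] \<open>s < x\<close>
      by (simp add: law_greaterThanAtMost)
    also have "\<dots> < 2 * d"
      using tail_s tail.pos[of s] \<open>0 < d\<close>
      by (intro relative_gap_less) (simp_all add: \<delta>_def field_simps power2_eq_square)
    finally show ?case
      using elim by (simp add: d_def)
  qed
qed

end

theorem lemma3p2: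
  fixes M :: "'a measure" and \<sigma> :: "nat \<Rightarrow> 'a \<Rightarrow> real"
  assumes "prob_space M"
    and indep: "prob_space.indep_vars M (\<lambda>_. borel) \<sigma> UNIV"
    and ident: "\<And>i. distr M borel (\<sigma> i) = distr M borel (\<sigma> 0)"
    and pos: "AE \<omega> in M. 0 < \<sigma> 0 \<omega>"
    and sv: "slowly_varying (tailL M (\<sigma> 0))"
  defines "L \<equiv> tailL M (\<sigma> 0)"
  shows "bdd_above_in_prob M (\<lambda>x \<omega>. real (first_exceed \<sigma> x \<omega>) / L x)
       \<and> bdd_below_in_prob M (\<lambda>x \<omega>. real (first_exceed \<sigma> x \<omega>) / L x)
       \<and> bdd_above_in_prob M (\<lambda>x \<omega>. L (\<sigma> (first_exceed \<sigma> x \<omega>) \<omega>) / L x - 1)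
       \<and> bdd_below_in_prob M (\<lambda>x \<omega>. L (\<sigma> (first_exceed \<sigma> x \<omega>) \<omega>) / L x - 1)
       \<and> bdd_above_in_prob M (\<lambda>x \<omega>. L (\<sigma> (prev_argmax \<sigma> x \<omega>) \<omega>) / L x)
       \<and> bdd_below_in_prob M (\<lambda>x \<omega>. L (\<sigma> (prev_argmax \<sigma> x \<omega>) \<omega>) / L x)
       \<and> bdd_above_in_prob M (\<lambda>x \<omega>. 1 - L (\<sigma> (prev_argmax \<sigma> x \<omega>) \<omega>) / L x)
       \<and> bdd_below_in_prob M (\<lambda>x \<omega>. 1 - L (\<sigma> (prev_argmax \<sigma> x \<omega>) \<omega>) / L x)"
proof -
  interpret iid_slowly_varying M \<sigma>
    using assms(1) indep ident sv by (simp add: iid_slowly_varying_def iid_sequence_def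
        iid_sequence_axioms_def iid_slowly_varying_axioms_def)
  show ?thesis
    unfolding L_def
    using first_exceed_scaled_bdd_above first_exceed_scaled_bdd_below
      overshoot_ratio_bdd_above overshoot_ratio_bdd_below
      prev_argmax_ratio_bdd_above prev_argmax_ratio_bdd_below
      prev_argmax_gap_bdd_above prev_argmax_gap_bdd_below
    by blast
qed

end
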